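(* Let $n\ge 3$ and let $M_t$, $t\in(-\infty,0]$, be a noncompact ancient solution of mean curvature flow in $\mathbb{R}^{n+1}$ which is strictly convex, uniformly two-convex, noncollapsed, and rotationally symmetric about the $x_{n+1}$-axis, with cross-sectional radius $r(z,t)$, extinction times $\mathcal{T}(z)$ and constants $C_1,C_2$ as in the context. Then there is $R_0$ such that whenever $z<0$, $t<\mathcal{T}(z)$ and $r(z,t)\ge R_0$, \[2(n-1)\,[\mathcal{T}(z)-t] \leq r(z,t)^2 \leq 2(n-1)\,[\mathcal{T}(z)-t] + 8C_2[\mathcal{T}(z)-t]^{\frac{1}{4}}+C_1^2.\]
   Context: Strictly convex: positive definite second fundamental form; uniformly two-convex: $\lambda_1+\lambda_2\ge\beta H$ for some $\beta>0$; noncollapsed: each $M_t$ bounds a domain and each $x\in M_t$ is touched from inside by a ball of radius $\alpha/H(x,t)$ in that domain. $M_t$ is oriented so that its noncompact end points in the positive $x_{n+1}$-direction and normalized so that the tip of $M_0$ is the origin. $r(z,t)$ is the radius of the round sphere $M_t\cap\{x_{n+1}=z\}$ (where nonempty); it satisfies $r_t=\frac{r_{zz}}{1+r_z^2}-\frac{n-1}{r}$, and $r>0$, $r_z>0$, $r_t<0$, $r_{zz}<0$. For $z<0$, $\mathcal{T}(z)$ is defined by $r(z,t)>0$ for $t<\mathcal{T}(z)$ and $\lim_{t\to\mathcal{T}(z)}r(z,t)=0$. $C_1,C_2$ are constants such that $0\le -r_{zz}(z,t)\le C_2\, r(z,t)^{-5/2}$ whenever $r(z,t)\ge C_1$ (such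 constants exist for this class of solutions). *)

theory Defs
  imports Complex_Main
begin

text \<open>Profile data of a rotationally symmetric, strictly convex, uniformly two-convex,
noncollapsed noncompact ancient mean curvature flow in R^(n+1) (tip of M_0 at the
origin, noncompact end pointing up), restricted to the region z < 0, t < T z.
r z t : radius of the cross section at height z and time t;
rz, rzz, rt : the partial derivatives r_z, r_zz, r_t;
T z : the extinction time of height z (for z < 0).\<close>

definition rot_mcf_profile ::
  "nat \<Rightarrow> (real \<Rightarrow> real \<Rightarrow> real) \<Rightarrow> (real \<Rightarrow> real \<Rightarrow> real) \<Rightarrow> (real \<Rightarrow> real \<Rightarrow> real)
     \<Rightarrow> (real \<Rightarrow> real \<Rightarrow> real) \<Rightarrow> (real \<Rightarrow> real) \<Rightarrow> bool" where
  "rot_mcf_profile n r rz rzz rt T \<longleftrightarrow>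
     (\<forall>z<0. T z \<le> 0 \<and>
        ((\<lambda>t. r z t) \<longlongrightarrow> 0) (at_left (T z)) \<and>
        (\<forall>t<T z.
           ((\<lambda>s. r z s) has_real_derivative rt z t) (at t) \<and>
           ((\<lambda>y. r y t) has_real_derivative rz z t) (at z) \<and>
           ((\<lambda>y. rz y t) has_real_derivative rzz z t) (at z) \<and>
           rt z t = rzz z t / (1 + (rz z t)\<^sup>2) - (real n - 1) / r z t \<and>
           r z t > 0 \<and> rz z t > 0 \<and> rt z t < 0 \<and> rzz z t < 0))"

end

theory Submission
  imports Defs
begin

text \<open>Fix a height z and write R(t) = r(z,t), m = n - 1. The profile equation reads
R' = Q - m/R with Q = r_zz/(1 + r_z^2) \<le> 0, so R^2 - 2m(T - t) is nonincreasing in t and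
tends to 0 at the extinction time T: this is the lower bound. Where R \<ge> C1 the curvature
estimate gives -RQ \<le> C2 R^(-3/2) \<le> C2 (T - t)^(-3/4), the last step by the lower bound;
hence R^2 - 2m(T - t) - 8 C2 (T - t)^(1/4) is nondecreasing as long as R \<ge> C1. Following it
until R first drops to C1, or up to extinction, bounds it by C1^2, so R0 = C1 works.\<close>

lemma powr_neg_le_of_le_sq:
  fixes a x p :: real
  assumes "0 < a" "a \<le> x\<^sup>2" "0 < x" "0 \<le> p"
  shows "x powr (- (2 * p)) \<le> a powr (- p)"
proof -
  have "x powr (- (2 * p)) = (x powr 2) powr (- p)"
    by (simp add: powr_powr)
  also have "\<dots> = (x\<^sup>2) powr (- p)"
    using assms(3) by (simp add: powr_realpow)
  also have "\<dots> \<le> a powr (- p)"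
    using assms by (intro powr_mono2') auto
  finally show ?thesis .
qed

lemma radius_sq_ge_of_extinction:
  fixes R D :: "real \<Rightarrow> real" and T m t :: real
  assumes der: "\<And>s. s < T \<Longrightarrow> (R has_real_derivative D s) (at s)"
    and pos: "\<And>s. s < T \<Longrightarrow> 0 < R s"
    and speed: "\<And>s. s < T \<Longrightarrow> D s \<le> - m / R s"
    and lim: "(R \<longlongrightarrow> 0) (at_left T)"
    and t: "t < T"
  shows "2 * m * (T - t) \<le> (R t)\<^sup>2"
proof -
  define \<psi> where "\<psi> u = (R u)\<^sup>2 - 2 * m * (T - u)" for u
  have \<psi>_antitone: "\<psi> u \<le> \<psi> t" if "t \<le> u" "u < T" for u
  proof (rule DERIV_nonpos_imp_nonincreasing[OF \<open>t \<le> u\<close>])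
    fix x assume "t \<le> x" "x \<le> u"
    with that have x: "x < T" by simp
    have "(\<psi> has_real_derivative 2 * (R x * D x + m)) (at x)"
      unfolding \<psi>_def by (auto intro!: derivative_eq_intros der[OF x] simp: algebra_simps)
    moreover have "R x * D x \<le> - m"
      using mult_left_mono[OF speed[OF x], of "R x"] pos[OF x] by simp
    ultimately show "\<exists>y. (\<psi> has_real_derivative y) (at x) \<and> y \<le> 0"
      by force
  qed
  have "(\<psi> \<longlongrightarrow> 0\<^sup>2 - 2 * m * (T - T)) (at_left T)"
    unfolding \<psi>_def by (intro tendsto_intros lim)
  moreover have "eventually (\<lambda>u. \<psi> u \<le> \<psi> t) (at_left T)"
    using eventually_at_left_real[OF t] by eventually_elim (use \<psi>_antitone in auto)
  ultimately have "0 \<le> \<psi> t"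
    by (intro tendsto_upperbound) auto
  then show ?thesis
    unfolding \<psi>_def by simp
qed

lemma radius_sq_le_of_extinction:
  fixes R D :: "real \<Rightarrow> real" and T m C1 C2 t :: real
  assumes der: "\<And>s. s < T \<Longrightarrow> (R has_real_derivative D s) (at s)"
    and pos: "\<And>s. s < T \<Longrightarrow> 0 < R s"
    and speed_le: "\<And>s. s < T \<Longrightarrow> D s \<le> - m / R s"
    and speed_ge: "\<And>s. s < T \<Longrightarrow> C1 \<le> R s \<Longrightarrow> - m / R s - C2 * R s powr (-5/2) \<le> D s"
    and lim: "(R \<longlongrightarrow> 0) (at_left T)"
    and m: "1/2 \<le> m" and C2: "0 \<le> C2"
    and t: "t < T" and Rt: "C1 \<le> R t"
  shows "(R t)\<^sup>2 \<le> 2 * m * (T - t) + 8 * C2 * (T - t) powr (1/4) + C1\<^sup>2"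
proof -
  define \<phi> where "\<phi> u = (R u)\<^sup>2 - 2 * m * (T - u) - 8 * C2 * (T - u) powr (1/4)" for u
  have R_antitone: "R s \<le> R u" if "u \<le> s" "s < T" for u s
  proof (rule DERIV_nonpos_imp_nonincreasing[OF \<open>u \<le> s\<close>])
    fix x assume "u \<le> x" "x \<le> s"
    with that have x: "x < T" by simp
    have "- m / R x \<le> 0"
      using m pos[OF x] by simp
    then show "\<exists>y. (R has_real_derivative y) (at x) \<and> y \<le> 0"
      using der[OF x] speed_le[OF x] by force
  qed
  have \<phi>_deriv: "(\<phi> has_real_derivative 2 * (R x * D x + m + C2 * (T - x) powr (-3/4))) (at x)"
    if x: "x < T" for x
    unfolding \<phi>_def
    by (auto intro!: derivative_eq_intros der[OF x] simp: algebra_simps powr_diff x)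
  have \<phi>_deriv_nonneg: "0 \<le> R x * D x + m + C2 * (T - x) powr (-3/4)"
    if x: "x < T" and Rx: "C1 \<le> R x" for x
  proof -
    have "2 * m * (T - x) \<le> (R x)\<^sup>2"
      by (rule radius_sq_ge_of_extinction[OF der pos speed_le lim x])
    moreover have "1 * (T - x) \<le> 2 * m * (T - x)"
      using m x by (intro mult_right_mono) auto
    ultimately have "T - x \<le> (R x)\<^sup>2"
      by (metis mult_1 order_trans)
    then have "R x powr (-3/2) \<le> (T - x) powr (-3/4)"
      using powr_neg_le_of_le_sq[of "T - x" "R x" "3/4"] pos[OF x] x by simp
    moreover have "R x * (- m / R x - C2 * R x powr (-5/2)) = - m - C2 * R x powr (-3/2)"
      using pos[OF x] by (simp add: algebra_simps powr_mult_base)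
    moreover have "R x * (- m / R x - C2 * R x powr (-5/2)) \<le> R x * D x"
      using speed_ge[OF x Rx] pos[OF x] by (intro mult_left_mono) auto
    ultimately show ?thesis
      using mult_left_mono[OF \<open>R x powr (-3/2) \<le> (T - x) powr (-3/4)\<close> C2] by linarith
  qed
  have \<phi>_mono: "\<phi> t \<le> \<phi> s" if "t \<le> s" "s < T" "C1 \<le> R s" for s
  proof (rule DERIV_nonneg_imp_nondecreasing[OF \<open>t \<le> s\<close>])
    fix x assume "t \<le> x" "x \<le> s"
    with that R_antitone have "x < T" "C1 \<le> R x"
      by (auto intro: order_trans)
    then show "\<exists>y. (\<phi> has_real_derivative y) (at x) \<and> 0 \<le> y"
      using \<phi>_deriv \<phi>_deriv_nonneg by force
  qed
  have \<phi>_le_sq: "\<phi> s \<le> (R s)\<^sup>2" if "s < T" for s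
  proof -
    have "0 \<le> m * (T - s)" "0 \<le> C2 * (T - s) powr (1/4)"
      using that m C2 by simp_all
    then show ?thesis
      unfolding \<phi>_def by simp
  qed
  have "\<phi> t \<le> C1\<^sup>2"
  proof (cases "\<exists>s. t \<le> s \<and> s < T \<and> R s < C1")
    case True
    then obtain s0 where s0: "t \<le> s0" "s0 < T" "R s0 < C1"
      by blast
    have "continuous_on {t..s0} R"
      using s0 by (intro DERIV_atLeastAtMost_imp_continuous_on) (meson der order_le_less_trans)
    then obtain s where s: "t \<le> s" "s \<le> s0" "R s = C1"
      using IVT2'[of R s0 C1 t] s0 Rt by auto
    then show ?thesis
      using \<phi>_mono[of s] \<phi>_le_sq[of s] s0 by simp
  next
    case False
    have "((\<lambda>u. (R u)\<^sup>2) \<longlongrightarrow> 0\<^sup>2) (at_left T)"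
      by (intro tendsto_intros lim)
    moreover have "eventually (\<lambda>u. \<phi> t \<le> (R u)\<^sup>2) (at_left T)"
      using eventually_at_left_real[OF t]
    proof eventually_elim
      case (elim u)
      with False have "C1 \<le> R u"
        by auto
      with elim show ?case
        using \<phi>_mono[of u] \<phi>_le_sq[of u] by simp
    qed
    ultimately have "\<phi> t \<le> 0"
      by (intro tendsto_lowerbound) auto
    then show ?thesis
      by (smt (verit) zero_le_power2)
  qed
  then show ?thesis
    unfolding \<phi>_def by simp
qed

lemma rot_mcf_profile_rt_le:
  assumes "rot_mcf_profile n r rz rzz rt T" "z < 0" "t < T z"
  shows "rt z t \<le> - (real n - 1) / r z t"
proof -
  have "rzz z t < 0" "rt z t = rzz z t / (1 + (rz z t)\<^sup>2) - (real n - 1) / r z t"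
    using assms unfolding rot_mcf_profile_def by auto
  moreover have "rzz z t / (1 + (rz z t)\<^sup>2) < 0"
    using \<open>rzz z t < 0\<close> by (simp add: divide_neg_pos add_pos_nonneg)
  ultimately show ?thesis
    by linarith
qed

lemma rot_mcf_profile_rt_ge:
  assumes "rot_mcf_profile n r rz rzz rt T" "z < 0" "t < T z" "- rzz z t \<le> B"
  shows "- (real n - 1) / r z t - B \<le> rt z t"
proof -
  have "rzz z t < 0" "rt z t = rzz z t / (1 + (rz z t)\<^sup>2) - (real n - 1) / r z t"
    using assms unfolding rot_mcf_profile_def by auto
  moreover have "rzz z t \<le> rzz z t / (1 + (rz z t)\<^sup>2)"
    using \<open>rzz z t < 0\<close> by (simp add: le_divide_eq mult_le_cancel_left1 add_pos_nonneg)
  ultimately show ?thesis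
    using assms(4) by linarith
qed

theorem corollary6p7:
  fixes n :: nat and r rz rzz rt :: "real \<Rightarrow> real \<Rightarrow> real" and T :: "real \<Rightarrow> real"
    and C1 C2 :: real
  assumes "n \<ge> 3"
    and "rot_mcf_profile n r rz rzz rt T"
    and "\<And>z t. z < 0 \<Longrightarrow> t < T z \<Longrightarrow> r z t \<ge> C1 \<Longrightarrow>
           0 \<le> - rzz z t \<and> - rzz z t \<le> C2 * r z t powr (-5/2)"
  shows "\<exists>R0. \<forall>z t. z < 0 \<longrightarrow> t < T z \<longrightarrow> r z t \<ge> R0 \<longrightarrow>
           2 * (real n - 1) * (T z - t) \<le> (r z t)\<^sup>2 \<and>
           (r z t)\<^sup>2 \<le> 2 * (real n - 1) * (T z - t) + 8 * C2 * (T z - t) powr (1/4) + C1\<^sup>2"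
proof (intro exI[of _ C1] allI impI)
  fix z t assume z: "z < 0" and t: "t < T z" and Rt: "C1 \<le> r z t"
  have profile: "\<And>s. s < T z \<Longrightarrow> ((\<lambda>s. r z s) has_real_derivative rt z s) (at s) \<and> 0 < r z s"
    "((\<lambda>s. r z s) \<longlongrightarrow> 0) (at_left (T z))"
    using assms(2)[unfolded rot_mcf_profile_def, rule_format, OF z] by blast+
  have speed_ge: "- (real n - 1) / r z s - C2 * r z s powr (-5/2) \<le> rt z s"
    if "s < T z" "C1 \<le> r z s" for s
    using rot_mcf_profile_rt_ge[OF assms(2) z that(1)] assms(3)[OF z that] by blast
  have "0 < r z t powr (-5/2)"
    using profile(1)[OF t] by simp
  then have "0 \<le> C2"
    using assms(3)[OF z t Rt] by (smt (verit) zero_le_mult_iff)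
  moreover have "1/2 \<le> real n - 1"
    using assms(1) by simp
  ultimately show "2 * (real n - 1) * (T z - t) \<le> (r z t)\<^sup>2 \<and>
      (r z t)\<^sup>2 \<le> 2 * (real n - 1) * (T z - t) + 8 * C2 * (T z - t) powr (1/4) + C1\<^sup>2"
    using radius_sq_ge_of_extinction radius_sq_le_of_extinction
      rot_mcf_profile_rt_le[OF assms(2) z] profile speed_ge t Rt by blast
qed

end
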